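(* Let $\mathcal{A}$ be an integral domain with field of fractions $\mathcal{F}$, let $\mathcal{Z}\subsetneq\mathcal{A}$ be a prime ideal, and let $\mathcal{P}=\{n/d\mid n\in\mathcal{A},\ d\in\mathcal{A}\setminus\mathcal{Z}\}$. Let $a,b,a',b'\in\mathcal{A}$ with $a'\neq0$, suppose $ab=a'b'$, and suppose $p=a/a'$ belongs to $\mathcal{P}$. If the pair $(a,b)$ is coprime over $\mathcal{A}$ (i.e. $xa+yb=1$ for some $x,y\in\mathcal{A}$), then the single-input single-output plant $p$ is stabilizable (whether or not $p$ has a coprime factorization over $\mathcal{A}$).
   Context: $\mathcal{A}$ is the ring of stable causal transfer functions, $\mathcal{F}$ its field of fractions, and elements of $\mathcal{P}$ are the causal transfer functions. For a single-input single-output plant $p\in\mathcal{F}$ and controller $c\in\mathcal{F}$ with $1+pc\neq0$, the closed-loop matrix is $H(p,c)=\begin{pmatrix}(1+pc)^{-1} & -p(1+pc)^{-1}\\ c(1+pc)^{-1} & (1+pc)^{-1}\end{pmatrix}$; $p$ is stabilizable if there exists $c\in\mathcal{F}$ with $1+pc\neq0$ such that all entries of $H(p,c)$ lie in $\mathcal{A}$. A coprime factorization of $p$ is $p=n/d$ with $n,d\in\mathcal{A}$, $d\neq0$, and $xn+yd=1$ for some $x,y\in\mathcal{A}$. *)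

theory Defs
  imports "HOL-Computational_Algebra.Fraction_Field"
begin

text \<open>The ring A is a type of class idom; its field of fractions F is 'a fract.\<close>

definition emb :: "'a::idom \<Rightarrow> 'a fract" where
  "emb a = Fract a 1"

definition ringA :: "'a::idom fract set" where
  "ringA = range emb"

definition prime_ideal :: "'a::idom set \<Rightarrow> bool" where
  "prime_ideal Z \<longleftrightarrow>
     0 \<in> Z \<and> (\<forall>x\<in>Z. \<forall>y\<in>Z. x + y \<in> Z) \<and> (\<forall>r. \<forall>x\<in>Z. r * x \<in> Z) \<and>
     Z \<noteq> UNIV \<and> (\<forall>x y. x * y \<in> Z \<longrightarrow> x \<in> Z \<or> y \<in> Z)"

definition ringP :: "'a::idom set \<Rightarrow> 'a fract set" where
  "ringP Z = {emb n / emb d | n d. d \<notin> Z}"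

definition H :: "'a::idom fract \<Rightarrow> 'a fract \<Rightarrow> nat \<Rightarrow> nat \<Rightarrow> 'a fract" where
  "H p c i j =
     (if i = 0 \<and> j = 0 then inverse (1 + p * c)
      else if i = 0 then - p * inverse (1 + p * c)
      else if j = 0 then c * inverse (1 + p * c)
      else inverse (1 + p * c))"

definition stabilizable :: "'a::idom fract \<Rightarrow> bool" where
  "stabilizable p \<longleftrightarrow>
     (\<exists>c. 1 + p * c \<noteq> 0 \<and> (\<forall>i<2. \<forall>j<2. H p c i j \<in> ringA))"

end

theory Submission
  imports Defs
begin

text \<open>
  If \<open>x a + y b = 1\<close> and \<open>y b \<noteq> 0\<close>, the controller \<open>c = x a' / (y b)\<close> gives
  \<open>1 + p c = 1 / (y b)\<close>, so the closed-loop entries are \<open>y b\<close>, \<open>-y b'\<close> (using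
  \<open>a b = a' b'\<close>) and \<open>x a'\<close>, all in \<open>A\<close>. If \<open>y b = 0\<close>, then \<open>x a = 1\<close>, so \<open>1/p = x a'\<close>
  lies in \<open>A\<close> and \<open>p\<close> is stabilized by \<open>c = 1 - 1/p\<close>.
\<close>

lemma emb_1 [simp]: "emb 1 = (1 :: 'a::idom fract)"
  by (simp add: emb_def One_fract_def)

lemma emb_add: "emb (a + b) = emb a + emb (b :: 'a::idom)"
  by (simp add: emb_def add_fract)

lemma emb_mult: "emb (a * b) = emb a * emb (b :: 'a::idom)"
  by (simp add: emb_def mult_fract)

lemma emb_uminus: "emb (- a) = - emb (a :: 'a::idom)"
  by (simp add: emb_def)

lemma emb_eq_0_iff [simp]: "emb (a :: 'a::idom) = 0 \<longleftrightarrow> a = 0"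
  by (simp add: emb_def Zero_fract_def eq_fract)

lemma emb_in_ringA [simp]: "emb a \<in> ringA"
  by (simp add: ringA_def)

lemma ringA_1 [simp]: "1 \<in> ringA"
  by (metis emb_1 emb_in_ringA)

lemma ringA_uminus [simp]: "s \<in> ringA \<Longrightarrow> - s \<in> ringA"
  by (auto simp: ringA_def emb_uminus[symmetric])

lemma ringA_add [simp]: "s \<in> ringA \<Longrightarrow> t \<in> ringA \<Longrightarrow> s + t \<in> ringA"
  by (auto simp: ringA_def emb_add[symmetric])

lemma ringA_diff [simp]: "s \<in> ringA \<Longrightarrow> t \<in> ringA \<Longrightarrow> s - t \<in> ringA"
  using ringA_add[of s "- t"] by simp

lemma ringA_mult [simp]: "s \<in> ringA \<Longrightarrow> t \<in> ringA \<Longrightarrow> s * t \<in> ringA"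
  by (auto simp: ringA_def emb_mult[symmetric])

text \<open>The controller is \<open>c = t / s\<close>, whose sensitivity \<open>(1 + p c)\<^sup>-\<^sup>1\<close> is \<open>s\<close>.\<close>
lemma stabilizableI:
  fixes p s t :: "'a::idom fract"
  assumes "s \<in> ringA" "t \<in> ringA" "p * s \<in> ringA"
    and "s \<noteq> 0" "s + p * t = 1"
  shows "stabilizable p"
proof -
  define c where "c = t / s"
  have sensitivity: "inverse (1 + p * c) = s"
    using assms(4,5) by (simp add: c_def field_simps)
  then have "1 + p * c \<noteq> 0"
    using assms(4) by auto
  moreover have "c * s = t"
    using assms(4) by (simp add: c_def)
  ultimately show ?thesis
    unfolding stabilizable_def
    using assms(1-3) sensitivity by (auto simp: H_def less_2_cases_iff)
qed

lemma stabilizable_if_inverse_in_ringA: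
  fixes p :: "'a::idom fract"
  assumes "p \<noteq> 0" "inverse p \<in> ringA"
  shows "stabilizable p"
proof (rule stabilizableI)
  let ?q = "inverse p"
  show "?q \<in> ringA" "?q * (1 - ?q) \<in> ringA" "p * ?q \<in> ringA" "?q \<noteq> 0"
    using assms by simp_all
  show "?q + p * (?q * (1 - ?q)) = 1"
    using assms(1) by (simp add: field_simps)
qed

lemma stabilizable_if_coprime_pair:
  fixes a b a' b' x y :: "'a::idom"
  assumes "a' \<noteq> 0" "a * b = a' * b'" "x * a + y * b = 1"
  shows "stabilizable (emb a / emb a')"
proof (cases "y * b = 0")
  case True
  then have "x * a = 1"
    using assms(3) by (metis add.right_neutral)
  then have "inverse (emb a) = emb x"
    by (metis emb_1 emb_mult inverse_unique mult.commute)
  then have "inverse (emb a / emb a') = emb (x * a')"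
    by (simp add: emb_mult divide_inverse)
  moreover have "emb a \<noteq> 0"
    using \<open>x * a = 1\<close> by auto
  ultimately show ?thesis
    using assms(1) by (intro stabilizable_if_inverse_in_ringA) simp_all
next
  case False
  have bezout: "emb x * emb a + emb y * emb b = 1"
    using arg_cong[OF assms(3), of emb] by (simp add: emb_add emb_mult)
  have cross: "emb a * emb b = emb a' * emb b'"
    using arg_cong[OF assms(2), of emb] by (simp add: emb_mult)
  show ?thesis
  proof (rule stabilizableI[where s = "emb (y * b)" and t = "emb (x * a')"])
    show "emb (y * b) + emb a / emb a' * emb (x * a') = 1"
      using assms(1) bezout by (simp add: emb_mult field_simps)
    have "emb a / emb a' * emb (y * b) = emb (y * b')"
      using assms(1) cross by (simp add: emb_mult field_simps)
    then show "emb a / emb a' * emb (y * b) \<in> ringA"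
      by simp
  qed (use False in simp_all)
qed

theorem proposition2:
  fixes Z :: "'a::idom set" and a b a' b' :: 'a
  assumes "prime_ideal Z"
    and "a' \<noteq> 0"
    and "a * b = a' * b'"
    and "emb a / emb a' \<in> ringP Z"
    and "\<exists>x y. x * a + y * b = 1"
  shows "stabilizable (emb a / emb a')"
  using assms(2,3,5) stabilizable_if_coprime_pair by blast

end
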